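(* Let $\mathcal G$ be a countably infinite set, $k$ an even positive integer and $\pi\in\mathcal B_{k/2}$. Then there exists a $\pi$-adopted sequence $G(\pi)=(G_1,\dots,G_k)\in\mathcal G^k$, and it is unique up to equivalence: any two $\pi$-adopted sequences are equivalent. Moreover $\#\{G_1,\dots,G_k\}=\frac k2+1$.
   Context: A pair-partition of $\{1,\dots,k\}$ is a partition all of whose blocks have exactly two elements; it is crossing if there exist $1\le a<b<c<d\le k$ with $\{a,c\},\{b,d\}\in\pi$, and non-crossing otherwise. For even $k$, $\mathcal B_{k/2}$ denotes the set of non-crossing pair-partitions of $\{1,\dots,k\}$. For $k\ge 4$, $\pi\in\mathcal B_{k/2}$ and a block $\{m,m+1\}\in\pi$ with $1\le m\le k-2$, $\pi\setminus^\bullet\{m,m+1\}\in\mathcal B_{k/2-1}$ denotes the pair-partition of $\{1,\dots,k-2\}$ obtained by deleting the block $\{m,m+1\}$ and relabelling every remaining element $a>m$ as $a-2$. $\pi$-adopted sequences. Let $\mathcal G$ be a countable set and $\pi\in\mathcal B_{k/2}$. A sequence $g=(g_1,\dots,g_k)\in\mathcal G^k$ is $\pi$-adopted, defined recursively in $k$, as follows. For $k=2$ (so $\pi=\{\{1,2\}\}$), $g$ is $\pi$-adopted iff $g_1\neq g_2$. For $k\ge 4$, $g$ is $\pi$-adopted iff for every block of $\pi$ of the form $\{m,m+1\}$ with $1\le m\le k-2$: (a) $g_m=g_{m+2}$ and $g_{m+1}\neq g_s$ for all $s\neq m+1$; and (b) the sequence $(g_1,\dots,g_m,g_{m+3},\dots,g_k)\in\mathcal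 G^{k-2}$, obtained by deleting $g_{m+1}$ and $g_{m+2}$, is $\pi\setminus^\bullet\{m,m+1\}$-adopted. Two sequences $g,h\in\mathcal G^k$ are equivalent if there is a bijection $\sigma:\mathcal G\to\mathcal G$ with $\sigma(g_i)=h_i$ for all $i$. *)

theory Defs
  imports Main "HOL-Library.Disjoint_Sets" "HOL-Library.Countable_Set"
begin

definition pair_partition :: "nat \<Rightarrow> nat set set \<Rightarrow> bool" where
  "pair_partition k \<pi> \<longleftrightarrow> partition_on {1..k} \<pi> \<and> (\<forall>B\<in>\<pi>. card B = 2)"

definition crossing :: "nat set set \<Rightarrow> bool" where
  "crossing \<pi> \<longleftrightarrow> (\<exists>a b c d. 1 \<le> a \<and> a < b \<and> b < c \<and> c < d \<and>
                     {a, c} \<in> \<pi> \<and> {b, d} \<in> \<pi>)"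

definition NCPP :: "nat \<Rightarrow> nat set set set" where
  "NCPP k = {\<pi>. pair_partition k \<pi> \<and> \<not> crossing \<pi>}"

definition del_block :: "nat set set \<Rightarrow> nat \<Rightarrow> nat set set" where
  "del_block \<pi> m = (\<lambda>B. (\<lambda>a. if a > m then a - 2 else a) ` B) ` (\<pi> - {{m, m + 1}})"

text \<open>Sequences (g_1,...,g_k) are modelled as functions nat => 'a; only the values on {1..k} matter.\<close>
function adopted :: "nat \<Rightarrow> nat set set \<Rightarrow> (nat \<Rightarrow> 'a) \<Rightarrow> bool" where
  "adopted k \<pi> g =
    (if k = 2 then g 1 \<noteq> g 2
     else if 4 \<le> k then
       (\<forall>m. 1 \<le> m \<and> m \<le> k - 2 \<and> {m, m + 1} \<in> \<pi> \<longrightarrow>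
          (g m = g (m + 2) \<and> (\<forall>s\<in>{1..k}. s \<noteq> m + 1 \<longrightarrow> g (m + 1) \<noteq> g s)) \<and>
          adopted (k - 2) (del_block \<pi> m) (\<lambda>i. if i \<le> m then g i else g (i + 2)))
     else False)"
  by pat_completeness auto
termination
  by (relation "measure (\<lambda>(k, _, _). k)") auto

definition equiv_seq :: "'a set \<Rightarrow> nat \<Rightarrow> (nat \<Rightarrow> 'a) \<Rightarrow> (nat \<Rightarrow> 'a) \<Rightarrow> bool" where
  "equiv_seq G k g h \<longleftrightarrow> (\<exists>\<sigma>. bij_betw \<sigma> G G \<and> (\<forall>i\<in>{1..k}. \<sigma> (g i) = h i))"

end

theory Submission
  imports Defs
begin

text \<open>
  The adopted sequences of a non-crossing pair-partition \<open>\<pi>\<close> are exactly the sequences with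
  \<open>g i = g j\<close> iff the interval \<open>[min i j, max i j)\<close> is a union of blocks of \<open>\<pi>\<close>.
  Unlike the recursive definition, this description refers to no particular adjacent block, and it
  is inherited along the deletion of any adjacent block \<open>{m, m + 1}\<close>: position \<open>m + 1\<close> carries a
  value occurring nowhere else, \<open>g m = g (m + 2)\<close>, and the other positions relabel onto the smaller
  partition. Since every non-crossing pair-partition has an adjacent block, induction along such
  deletions gives existence, one fresh value per deletion and hence \<open>k/2 + 1\<close> values in all.
  Two sequences with the same equality pattern differ by a bijection of their finite value sets,
  which extends to a bijection of the countably infinite ground set.
\<close>

declare adopted.simps [simp del]

lemma NCPP_block_subset: "\<pi> \<in> NCPP k \<Longrightarrow> B \<in> \<pi> \<Longrightarrow> B \<subseteq> {1..k}"
  unfolding NCPP_def pair_partition_def partition_on_def by auto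

lemma NCPP_blockE:
  assumes "\<pi> \<in> NCPP k" "B \<in> \<pi>"
  obtains a b where "a < b" "B = {a, b}"
proof -
  have "card B = 2" using assms unfolding NCPP_def pair_partition_def by auto
  then obtain x y where "B = {x, y}" "x \<noteq> y" by (auto simp: card_2_iff)
  then show ?thesis using that by (metis insert_commute linorder_neqE_nat)
qed

lemma NCPP_disjoint: "\<pi> \<in> NCPP k \<Longrightarrow> disjoint \<pi>"
  unfolding NCPP_def pair_partition_def partition_on_def by blast

lemma NCPP_block_unique:
  assumes "\<pi> \<in> NCPP k" "B \<in> \<pi>" "C \<in> \<pi>" "x \<in> B" "x \<in> C"
  shows "B = C"
  using assms(4,5) disjointD[OF NCPP_disjoint[OF assms(1)] assms(2,3)] by blast

lemma NCPP_block_containingE: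
  assumes "\<pi> \<in> NCPP k" "x \<in> {1..k}"
  obtains a b where "a < b" "{a, b} \<in> \<pi>" "x = a \<or> x = b" "1 \<le> a" "b \<le> k"
proof -
  obtain B where B: "B \<in> \<pi>" "x \<in> B"
    using assms unfolding NCPP_def pair_partition_def partition_on_def by blast
  obtain a b where "a < b" "B = {a, b}" using NCPP_blockE[OF assms(1) B(1)] .
  then show ?thesis using that B NCPP_block_subset[OF assms(1) B(1)] by auto
qed

lemma NCPP_not_crossing:
  "\<pi> \<in> NCPP k \<Longrightarrow> {a, c} \<in> \<pi> \<Longrightarrow> {b, d} \<in> \<pi> \<Longrightarrow> 1 \<le> a \<Longrightarrow> a < b \<Longrightarrow> b < c \<Longrightarrow> c < d \<Longrightarrow> False"
  unfolding NCPP_def crossing_def by blast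

lemma NCPP_adjacent_block_between:
  assumes P: "\<pi> \<in> NCPP k" and ab: "{a, b} \<in> \<pi>" "a < b"
  shows "\<exists>m. a \<le> m \<and> m + 1 \<le> b \<and> {m, m + 1} \<in> \<pi>"
  using ab
proof (induction "b - a" arbitrary: a b rule: less_induct)
  case less
  show ?case
  proof (cases "b = a + 1")
    case True
    then show ?thesis using less.prems by auto
  next
    case False
    have "1 \<le> a" using NCPP_block_subset[OF P less.prems(1)] by auto
    then have "a + 1 \<in> {1..k}" using NCPP_block_subset[OF P less.prems(1)] less.prems(2) by auto
    then obtain c d where cd: "c < d" "{c, d} \<in> \<pi>" "a + 1 = c \<or> a + 1 = d" "1 \<le> c"
      by (rule NCPP_block_containingE[OF P])
    have "a + 1 \<notin> {a, b}" using False by simp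
    then have "{c, d} \<noteq> {a, b}" using cd(3) by blast
    then have "a \<notin> {c, d}" "b \<notin> {c, d}"
      using NCPP_block_unique[OF P less.prems(1) cd(2)] by blast+
    have "a + 1 < b" using False less.prems(2) by simp
    \<comment> \<open>non-crossing puts the block of \<open>a + 1\<close> strictly inside \<open>(a, b)\<close>\<close>
    have "a < c \<and> d < b"
    proof (cases "a + 1 = c")
      case True
      then have "\<not> b < d"
        using NCPP_not_crossing[OF P less.prems(1) cd(2) \<open>1 \<le> a\<close>] \<open>a + 1 < b\<close> by auto
      then show ?thesis using True \<open>b \<notin> {c, d}\<close> by auto
    next
      case False
      then have "c < a" "a < d" using cd(1,3) \<open>a \<notin> {c, d}\<close> by auto
      then show ?thesis
        using NCPP_not_crossing[OF P cd(2) less.prems(1)] cd(3,4) \<open>a + 1 < b\<close> False by auto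
    qed
    then have "d - c < b - a" using cd(1) by linarith
    then obtain m where "c \<le> m" "m + 1 \<le> d" "{m, m + 1} \<in> \<pi>"
      using less.hyps[of d c] cd(1,2) by blast
    then show ?thesis using \<open>a < c \<and> d < b\<close> by (intro exI[of _ m]) auto
  qed
qed

lemma NCPP_adjacent_block:
  assumes P: "\<pi> \<in> NCPP k" and "4 \<le> k"
  obtains m where "1 \<le> m" "m \<le> k - 2" "{m, m + 1} \<in> \<pi>"
proof -
  obtain a b where ab: "a < b" "{a, b} \<in> \<pi>" "b \<le> k - 1"
  proof -
    obtain a b where ab: "a < b" "{a, b} \<in> \<pi>" "1 = a \<or> 1 = b" "1 \<le> a" "b \<le> k"
      by (rule NCPP_block_containingE[OF P, of 1]) (use assms(2) in auto)
    obtain c d where cd: "c < d" "{c, d} \<in> \<pi>" "2 = c \<or> 2 = d" "1 \<le> c" "d \<le> k"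
      by (rule NCPP_block_containingE[OF P, of 2]) (use assms(2) in auto)
    have "b \<noteq> k \<or> d \<noteq> k"
    proof (rule ccontr)
      assume both: "\<not> (b \<noteq> k \<or> d \<noteq> k)"
      then have "{a, b} = {c, d}" using NCPP_block_unique[OF P ab(2) cd(2), of k] by auto
      then show False using ab(1,3,4) cd(3) both assms(2) by (auto simp: doubleton_eq_iff)
    qed
    then show ?thesis using that ab cd by fastforce
  qed
  then obtain m where m: "a \<le> m" "m + 1 \<le> b" "{m, m + 1} \<in> \<pi>"
    using NCPP_adjacent_block_between[OF P ab(2,1)] by blast
  have "1 \<le> a" using NCPP_block_subset[OF P ab(2)] by auto
  then have "1 \<le> m" "m \<le> k - 2" using m(1,2) ab(3) by arith+
  then show ?thesis using that m(3) by blast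
qed

definition relabel :: "nat \<Rightarrow> nat \<Rightarrow> nat" where
  "relabel m a = (if a > m then a - 2 else a)"

text \<open>\<open>skip m\<close> lists the positions kept by the reduced sequence in the definition of \<open>adopted\<close>.\<close>

definition skip :: "nat \<Rightarrow> nat \<Rightarrow> nat" where
  "skip m i = (if i \<le> m then i else i + 2)"

lemma del_block_relabel: "del_block \<pi> m = (\<lambda>B. relabel m ` B) ` (\<pi> - {{m, m + 1}})"
  by (simp add: del_block_def relabel_def[abs_def])

lemma relabel_skip [simp]: "relabel m (skip m i) = i"
  by (simp add: relabel_def skip_def)

lemma skip_neq: "skip m i \<noteq> m + 1"
  by (simp add: skip_def)

lemma skip_range: "i \<in> {1..k - 2} \<Longrightarrow> m \<le> k - 2 \<Longrightarrow> skip m i \<in> {1..k}"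
  by (auto simp: skip_def)

lemma relabel_range:
  "i \<in> {1..k} \<Longrightarrow> i \<noteq> m + 1 \<Longrightarrow> 1 \<le> m \<Longrightarrow> m \<le> k - 2 \<Longrightarrow> relabel m i \<in> {1..k - 2}"
  by (auto simp: relabel_def)

lemma relabel_strict_mono_on: "strict_mono_on (- {m, m + 1}) (relabel m)"
  by (auto simp: strict_mono_on_def relabel_def)

definition saturated :: "'a set set \<Rightarrow> 'a set \<Rightarrow> bool" where
  "saturated \<pi> S \<longleftrightarrow> (\<forall>B\<in>\<pi>. B \<subseteq> S \<or> B \<inter> S = {})"

definition adopted_kernel :: "nat \<Rightarrow> nat set set \<Rightarrow> (nat \<Rightarrow> 'a) \<Rightarrow> bool" where
  "adopted_kernel k \<pi> g \<longleftrightarrow>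
     (\<forall>i\<in>{1..k}. \<forall>j\<in>{1..k}. g i = g j \<longleftrightarrow> saturated \<pi> {min i j..<max i j})"

lemma saturated_empty [simp]: "saturated \<pi> {}"
  by (simp add: saturated_def)

lemma saturated_block_iff:
  assumes "saturated \<pi> S" "{x, y} \<in> \<pi>"
  shows "x \<in> S \<longleftrightarrow> y \<in> S"
proof -
  have "{x, y} \<subseteq> S \<or> {x, y} \<inter> S = {}" using assms unfolding saturated_def by (rule bspec)
  then show ?thesis by auto
qed

lemma not_saturated_adjacent:
  fixes m j :: nat
  assumes "{m, m + 1} \<in> \<pi>" "j \<noteq> m + 1"
  shows "\<not> saturated \<pi> {min (m + 1) j..<max (m + 1) j}"
proof (cases "j < m + 1")
  case True
  then have "m \<in> {min (m + 1) j..<max (m + 1) j}" "m + 1 \<notin> {min (m + 1) j..<max (m + 1) j}"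
    by auto
  then show ?thesis using saturated_block_iff[OF _ assms(1)] by blast
next
  case False
  then have "m \<notin> {min (m + 1) j..<max (m + 1) j}" "m + 1 \<in> {min (m + 1) j..<max (m + 1) j}"
    using assms(2) by auto
  then show ?thesis using saturated_block_iff[OF _ assms(1)] by blast
qed

lemma adopted_kernel_two:
  assumes "\<pi> \<in> NCPP 2"
  shows "adopted_kernel 2 \<pi> g \<longleftrightarrow> g 1 \<noteq> g 2"
proof -
  obtain a b where "a < b" "{a, b} \<in> \<pi>" "1 = a \<or> 1 = b" "1 \<le> a" "b \<le> 2"
    by (rule NCPP_block_containingE[OF assms, of 1]) auto
  then have "a = 1" "b = 2" by linarith+
  with \<open>{a, b} \<in> \<pi>\<close> have "{1, 1 + 1} \<in> \<pi>" by (simp add: numeral_2_eq_2)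
  from not_saturated_adjacent[OF this, of 1] have "\<not> saturated \<pi> {1}"
    by (simp add: numeral_2_eq_2 atLeastLessThan_singleton)
  moreover have "{1..2::nat} = {1, 2}" by auto
  ultimately show ?thesis unfolding adopted_kernel_def by (simp add: eq_commute[of "g 2"])
qed

lemma reduced_seq_skip: "(\<lambda>i. if i \<le> m then g i else g (i + 2)) = g \<circ> skip m"
  by (auto simp: skip_def)

lemma skip_relabel_eq:
  assumes "g m = g (m + 2)" "i \<noteq> m + 1"
  shows "g (skip m (relabel m i)) = g i"
proof -
  consider "i \<le> m" | "i = m + 2" | "m + 2 < i" using assms(2) by linarith
  then show ?thesis
  proof cases
    case 3
    then have "relabel m i = i - 2" "m < i - 2" "i - 2 + 2 = i" by (auto simp: relabel_def)
    then show ?thesis by (simp only: skip_def if_False not_le[symmetric])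
  qed (use assms(1) in \<open>simp_all add: skip_def relabel_def\<close>)
qed

context
  fixes \<pi> :: "nat set set" and k m :: nat
  assumes P: "\<pi> \<in> NCPP k" and adj: "{m, m + 1} \<in> \<pi>" and m: "1 \<le> m" "m \<le> k - 2"
begin

lemma block_avoids_adjacent: "B \<in> \<pi> - {{m, m + 1}} \<Longrightarrow> B \<subseteq> - {m, m + 1}"
  using NCPP_block_unique[OF P adj, of B] by auto

lemma del_block_union: "\<Union> (del_block \<pi> m) = {1..k - 2}"
proof
  show "\<Union> (del_block \<pi> m) \<subseteq> {1..k - 2}"
    using NCPP_block_subset[OF P] block_avoids_adjacent relabel_range[OF _ _ m]
    unfolding del_block_relabel by blast
next
  show "{1..k - 2} \<subseteq> \<Union> (del_block \<pi> m)"
  proof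
    fix i assume i: "i \<in> {1..k - 2}"
    define a where "a = (if i < m then i else i + 2)"
    have a: "a \<in> {1..k}" "a \<notin> {m, m + 1}" "relabel m a = i"
      using i m unfolding a_def relabel_def by auto
    obtain B where "B \<in> \<pi>" "a \<in> B"
      using P a(1) unfolding NCPP_def pair_partition_def partition_on_def by blast
    then show "i \<in> \<Union> (del_block \<pi> m)"
      using a(2,3) unfolding del_block_relabel by auto
  qed
qed

lemma del_block_card:
  assumes "X \<in> del_block \<pi> m"
  shows "card X = 2"
proof -
  obtain B where B: "B \<in> \<pi> - {{m, m + 1}}" "X = relabel m ` B"
    using assms unfolding del_block_relabel by blast
  have "inj_on (relabel m) B"
    using strict_mono_on_imp_inj_on[OF relabel_strict_mono_on] block_avoids_adjacent[OF B(1)]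
    by (rule inj_on_subset)
  moreover have "card B = 2" using P B(1) unfolding NCPP_def pair_partition_def by auto
  ultimately show ?thesis using B(2) by (simp add: card_image)
qed

lemma del_block_disjoint: "disjoint (del_block \<pi> m)"
proof (rule disjointI)
  fix X Y assume X: "X \<in> del_block \<pi> m" and Y: "Y \<in> del_block \<pi> m" and "X \<noteq> Y"
  obtain B where B: "B \<in> \<pi> - {{m, m + 1}}" "X = relabel m ` B"
    using X unfolding del_block_relabel by blast
  obtain C where C: "C \<in> \<pi> - {{m, m + 1}}" "Y = relabel m ` C"
    using Y unfolding del_block_relabel by blast
  have "B \<inter> C = {}"
    using disjointD[OF NCPP_disjoint[OF P]] B C \<open>X \<noteq> Y\<close> by blast
  moreover have "relabel m ` B \<inter> relabel m ` C = relabel m ` (B \<inter> C)"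
    by (rule inj_on_image_Int[OF strict_mono_on_imp_inj_on[OF relabel_strict_mono_on]
          block_avoids_adjacent[OF B(1)] block_avoids_adjacent[OF C(1)], symmetric])
  ultimately show "X \<inter> Y = {}" unfolding B(2) C(2) by simp
qed

lemma del_block_not_crossing: "\<not> crossing (del_block \<pi> m)"
proof
  assume "crossing (del_block \<pi> m)"
  then obtain a b c d where abcd: "1 \<le> a" "a < b" "b < c" "c < d"
    and ac: "{a, c} \<in> del_block \<pi> m" and bd: "{b, d} \<in> del_block \<pi> m"
    unfolding crossing_def by blast
  have lift: "\<exists>x y. x < y \<and> {x, y} \<in> \<pi> \<and> x \<notin> {m, m + 1} \<and> y \<notin> {m, m + 1}
      \<and> relabel m x = u \<and> relabel m y = v"
    if uv: "{u, v} \<in> del_block \<pi> m" "u < v" for u v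
  proof -
    obtain B where B: "B \<in> \<pi> - {{m, m + 1}}" "{u, v} = relabel m ` B"
      using uv(1) unfolding del_block_relabel by blast
    obtain x y where xy: "x < y" "B = {x, y}" using NCPP_blockE[OF P] B(1) by blast
    have "x \<notin> {m, m + 1}" "y \<notin> {m, m + 1}" using block_avoids_adjacent[OF B(1)] xy(2) by auto
    moreover have "relabel m x < relabel m y"
      using strict_mono_onD[OF relabel_strict_mono_on] xy(1) calculation by blast
    ultimately show ?thesis using B xy uv(2) by (auto simp: doubleton_eq_iff)
  qed
  obtain x z where xz: "x < z" "{x, z} \<in> \<pi>" "x \<notin> {m, m + 1}" "z \<notin> {m, m + 1}"
    "relabel m x = a" "relabel m z = c"
    using lift[OF ac] abcd by auto
  obtain y w where yw: "y < w" "{y, w} \<in> \<pi>" "y \<notin> {m, m + 1}" "w \<notin> {m, m + 1}"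
    "relabel m y = b" "relabel m w = d"
    using lift[OF bd] abcd by auto
  have "x < y" "y < z" "z < w"
    using strict_mono_on_less[OF relabel_strict_mono_on] abcd xz yw by auto
  moreover have "1 \<le> x" using NCPP_block_subset[OF P xz(2)] by auto
  ultimately show False using NCPP_not_crossing[OF P xz(2) yw(2)] by blast
qed

lemma NCPP_del_block: "del_block \<pi> m \<in> NCPP (k - 2)"
  using del_block_union del_block_disjoint del_block_card del_block_not_crossing
  unfolding NCPP_def pair_partition_def partition_on_def by fastforce

lemma saturated_del_block:
  assumes "i \<noteq> m + 1" "j \<noteq> m + 1"
  shows "saturated \<pi> {min i j..<max i j} \<longleftrightarrow>
    saturated (del_block \<pi> m) {min (relabel m i) (relabel m j)..<max (relabel m i) (relabel m j)}"
proof -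
  let ?S = "{min i j..<max i j}"
  let ?S' = "{min (relabel m i) (relabel m j)..<max (relabel m i) (relabel m j)}"
  have "{m, m + 1} \<subseteq> ?S \<or> {m, m + 1} \<inter> ?S = {}"
    using assms by (auto simp: min_def max_def)
  then have "saturated \<pi> ?S \<longleftrightarrow> (\<forall>B\<in>\<pi> - {{m, m + 1}}. B \<subseteq> ?S \<or> B \<inter> ?S = {})"
    unfolding saturated_def by blast
  moreover have "a \<in> ?S \<longleftrightarrow> relabel m a \<in> ?S'" if "a \<notin> {m, m + 1}" for a
    using that assms by (auto simp: relabel_def min_def max_def)
  then have "B \<subseteq> ?S \<or> B \<inter> ?S = {} \<longleftrightarrow> relabel m ` B \<subseteq> ?S' \<or> relabel m ` B \<inter> ?S' = {}"
    if "B \<in> \<pi> - {{m, m + 1}}" for B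
    using block_avoids_adjacent[OF that] by blast
  ultimately show ?thesis unfolding saturated_def del_block_relabel by auto
qed

lemma adopted_kernel_del_block:
  assumes "adopted_kernel k \<pi> g"
  shows "adopted_kernel (k - 2) (del_block \<pi> m) (g \<circ> skip m)"
  unfolding adopted_kernel_def
proof (intro ballI)
  fix i j assume "i \<in> {1..k - 2}" "j \<in> {1..k - 2}"
  then have "(g \<circ> skip m) i = (g \<circ> skip m) j \<longleftrightarrow>
      saturated \<pi> {min (skip m i) (skip m j)..<max (skip m i) (skip m j)}"
    using assms skip_range[OF _ m(2)] unfolding adopted_kernel_def comp_def by blast
  then show "(g \<circ> skip m) i = (g \<circ> skip m) j \<longleftrightarrow> saturated (del_block \<pi> m) {min i j..<max i j}"
    using saturated_del_block[OF skip_neq skip_neq] by simp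
qed

lemma adopted_kernel_of_del_block:
  assumes twin: "g m = g (m + 2)" and fresh: "\<And>s. s \<in> {1..k} \<Longrightarrow> s \<noteq> m + 1 \<Longrightarrow> g (m + 1) \<noteq> g s"
    and reduced: "adopted_kernel (k - 2) (del_block \<pi> m) (g \<circ> skip m)"
  shows "adopted_kernel k \<pi> g"
  unfolding adopted_kernel_def
proof (intro ballI)
  fix i j assume ij: "i \<in> {1..k}" "j \<in> {1..k}"
  show "g i = g j \<longleftrightarrow> saturated \<pi> {min i j..<max i j}"
  proof (cases "i = m + 1 \<or> j = m + 1")
    case True
    show ?thesis
    proof (cases "i = j")
      case False
      then have "g i \<noteq> g j" using True fresh ij by metis
      moreover have "\<not> saturated \<pi> {min i j..<max i j}"
        using True False not_saturated_adjacent[OF adj, of i] not_saturated_adjacent[OF adj, of j]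
        by (auto simp: min.commute max.commute)
      ultimately show ?thesis by blast
    qed simp
  next
    case False
    then have "g i = g j \<longleftrightarrow> (g \<circ> skip m) (relabel m i) = (g \<circ> skip m) (relabel m j)"
      using skip_relabel_eq[OF twin] by simp
    also have "\<dots> \<longleftrightarrow> saturated (del_block \<pi> m)
        {min (relabel m i) (relabel m j)..<max (relabel m i) (relabel m j)}"
      using reduced relabel_range[OF _ _ m] ij False unfolding adopted_kernel_def by simp
    also have "\<dots> \<longleftrightarrow> saturated \<pi> {min i j..<max i j}"
      using saturated_del_block False by simp
    finally show ?thesis .
  qed
qed

lemma adopted_kernel_del_block_iff:
  "adopted_kernel k \<pi> g \<longleftrightarrow>
     g m = g (m + 2) \<and> (\<forall>s\<in>{1..k}. s \<noteq> m + 1 \<longrightarrow> g (m + 1) \<noteq> g s) \<and>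
     adopted_kernel (k - 2) (del_block \<pi> m) (g \<circ> skip m)"
proof
  assume K: "adopted_kernel k \<pi> g"
  have range: "m \<in> {1..k}" "m + 1 \<in> {1..k}" "m + 2 \<in> {1..k}" using m by auto
  have "saturated \<pi> {m..<m + 2}"
    using saturated_del_block[of m "m + 2"] by (simp add: relabel_def)
  then have "g m = g (m + 2)" using K range unfolding adopted_kernel_def by auto
  moreover have "\<forall>s\<in>{1..k}. s \<noteq> m + 1 \<longrightarrow> g (m + 1) \<noteq> g s"
    using K range not_saturated_adjacent[OF adj] unfolding adopted_kernel_def by blast
  ultimately show "g m = g (m + 2) \<and> (\<forall>s\<in>{1..k}. s \<noteq> m + 1 \<longrightarrow> g (m + 1) \<noteq> g s) \<and>
     adopted_kernel (k - 2) (del_block \<pi> m) (g \<circ> skip m)"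
    using adopted_kernel_del_block[OF K] by blast
qed (use adopted_kernel_of_del_block in blast)

end

lemma NCPP_induct [consumes 3, case_names two del_block]:
  assumes "\<pi> \<in> NCPP k" "even k" "0 < k"
    and two: "\<And>\<pi>. \<pi> \<in> NCPP 2 \<Longrightarrow> P 2 \<pi>"
    and del_block: "\<And>k \<pi>. 4 \<le> k \<Longrightarrow> \<pi> \<in> NCPP k \<Longrightarrow>
      (\<And>m. 1 \<le> m \<Longrightarrow> m \<le> k - 2 \<Longrightarrow> {m, m + 1} \<in> \<pi> \<Longrightarrow> P (k - 2) (del_block \<pi> m)) \<Longrightarrow> P k \<pi>"
  shows "P k \<pi>"
  using assms(1-3)
proof (induction k arbitrary: \<pi> rule: less_induct)
  case (less k)
  show ?case
  proof (cases "k = 2")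
    case True
    then show ?thesis using two less.prems(1) by simp
  next
    case False
    then have "4 \<le> k" using less.prems(2,3) by presburger
    then show ?thesis
      using del_block less.prems less.IH NCPP_del_block by simp
  qed
qed

lemma adopted_iff_adopted_kernel:
  assumes "\<pi> \<in> NCPP k" "even k" "0 < k"
  shows "adopted k \<pi> g \<longleftrightarrow> adopted_kernel k \<pi> g"
  using assms
proof (induction k \<pi> arbitrary: g rule: NCPP_induct)
  case (two \<pi>)
  have "adopted 2 \<pi> g \<longleftrightarrow> g 1 \<noteq> g 2" by (simp add: adopted.simps)
  then show ?case using adopted_kernel_two[OF two, of g] by blast
next
  case (del_block k \<pi>)
  obtain m where m: "1 \<le> m" "m \<le> k - 2" "{m, m + 1} \<in> \<pi>"
    using NCPP_adjacent_block[OF del_block.hyps(2,1)] .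
  have "adopted k \<pi> g \<longleftrightarrow> (\<forall>m. 1 \<le> m \<and> m \<le> k - 2 \<and> {m, m + 1} \<in> \<pi> \<longrightarrow>
      (g m = g (m + 2) \<and> (\<forall>s\<in>{1..k}. s \<noteq> m + 1 \<longrightarrow> g (m + 1) \<noteq> g s)) \<and>
      adopted (k - 2) (del_block \<pi> m) (\<lambda>i. if i \<le> m then g i else g (i + 2)))"
    using del_block.hyps(1) by (subst adopted.simps) simp
  also have "\<dots> \<longleftrightarrow> (\<forall>m. 1 \<le> m \<and> m \<le> k - 2 \<and> {m, m + 1} \<in> \<pi> \<longrightarrow> adopted_kernel k \<pi> g)"
    apply (intro all_cong1 imp_cong refl)
    subgoal for m
      using del_block.IH[of m] adopted_kernel_del_block_iff[OF del_block.hyps(2), of m g]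
      unfolding reduced_seq_skip by auto
    done
  finally have "adopted k \<pi> g \<longleftrightarrow> (\<forall>m. 1 \<le> m \<and> m \<le> k - 2 \<and> {m, m + 1} \<in> \<pi> \<longrightarrow> adopted_kernel k \<pi> g)" .
  then show ?case using m by blast
qed

lemma adopted_kernel_exists:
  assumes "\<pi> \<in> NCPP k" "even k" "0 < k" and G: "infinite G"
  shows "\<exists>g. (\<forall>i\<in>{1..k}. g i \<in> G) \<and> adopted_kernel k \<pi> g"
  using assms(1-3)
proof (induction k \<pi> rule: NCPP_induct)
  case (two \<pi>)
  obtain x where x: "x \<in> G" using infinite_imp_nonempty[OF G] by auto
  obtain y where y: "y \<in> G - {x}" using infinite_imp_nonempty[OF infinite_remove[OF G]] by auto
  define g where "g i = (if i = 1 then x else y)" for i :: nat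
  have "adopted_kernel 2 \<pi> g"
    using y by (subst adopted_kernel_two[OF two]) (auto simp: g_def)
  moreover have "\<forall>i\<in>{1..2}. g i \<in> G" using x y by (simp add: g_def)
  ultimately show ?case by blast
next
  case (del_block k \<pi>)
  obtain m where m: "1 \<le> m" "m \<le> k - 2" "{m, m + 1} \<in> \<pi>"
    using NCPP_adjacent_block[OF del_block.hyps(2,1)] .
  obtain g' where g': "\<forall>i\<in>{1..k - 2}. g' i \<in> G" "adopted_kernel (k - 2) (del_block \<pi> m) g'"
    using del_block.IH[OF m] by blast
  obtain x where x: "x \<in> G" "x \<notin> g' ` {1..k - 2}"
    using Diff_infinite_finite[OF _ G, of "g' ` {1..k - 2}"] infinite_imp_nonempty by blast
  define g where "g i = (if i = m + 1 then x else g' (relabel m i))" for i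
  have twin: "g m = g (m + 2)" and reduced: "g \<circ> skip m = g'"
    unfolding g_def relabel_def skip_def by auto
  have fresh: "g (m + 1) \<noteq> g s" if "s \<in> {1..k}" "s \<noteq> m + 1" for s
    using x(2) relabel_range[OF that m(1,2)] that(2) unfolding g_def by auto
  have "adopted_kernel k \<pi> g"
    using adopted_kernel_of_del_block[OF del_block.hyps(2) m(3,1,2) twin fresh] g'(2) reduced by simp
  moreover have "\<forall>i\<in>{1..k}. g i \<in> G"
    using x(1) g'(1) relabel_range[OF _ _ m(1,2)] unfolding g_def by auto
  ultimately show ?case by blast
qed

lemma card_adopted_kernel:
  assumes "\<pi> \<in> NCPP k" "even k" "0 < k" "adopted_kernel k \<pi> g"
  shows "card (g ` {1..k}) = k div 2 + 1"
  using assms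
proof (induction k \<pi> arbitrary: g rule: NCPP_induct)
  case (two \<pi>)
  then have "g 1 \<noteq> g 2" using adopted_kernel_two by blast
  moreover have "{1..2::nat} = {1, 2}" by auto
  ultimately show ?case by simp
next
  case (del_block k \<pi>)
  obtain m where m: "1 \<le> m" "m \<le> k - 2" "{m, m + 1} \<in> \<pi>"
    using NCPP_adjacent_block[OF del_block.hyps(2,1)] .
  note parts = adopted_kernel_del_block_iff[OF del_block.hyps(2) m(3,1,2), THEN iffD1, OF del_block.prems]
  have twin: "g m = g (m + 2)" using parts by (rule conjunct1)
  have fresh: "\<forall>s\<in>{1..k}. s \<noteq> m + 1 \<longrightarrow> g (m + 1) \<noteq> g s"
    using parts by (rule conjunct2[THEN conjunct1])
  have reduced: "adopted_kernel (k - 2) (del_block \<pi> m) (g \<circ> skip m)"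
    using parts by (rule conjunct2[THEN conjunct2])
  have "g ` {1..k} = insert (g (m + 1)) ((g \<circ> skip m) ` {1..k - 2})"
  proof
    show "g ` {1..k} \<subseteq> insert (g (m + 1)) ((g \<circ> skip m) ` {1..k - 2})"
    proof
      fix y assume "y \<in> g ` {1..k}"
      then obtain i where i: "i \<in> {1..k}" "y = g i" by blast
      show "y \<in> insert (g (m + 1)) ((g \<circ> skip m) ` {1..k - 2})"
      proof (cases "i = m + 1")
        case False
        then have "y = (g \<circ> skip m) (relabel m i)" using i(2) skip_relabel_eq[OF twin] by simp
        moreover have "relabel m i \<in> {1..k - 2}" using relabel_range[OF i(1) False m(1,2)] .
        ultimately show ?thesis by blast
      qed (use i in simp)
    qed
    show "insert (g (m + 1)) ((g \<circ> skip m) ` {1..k - 2}) \<subseteq> g ` {1..k}"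
      using skip_range[OF _ m(2)] m by auto
  qed
  moreover have "g (m + 1) \<notin> (g \<circ> skip m) ` {1..k - 2}"
    using fresh skip_range[OF _ m(2)] skip_neq by fastforce
  ultimately show ?case
    using del_block.IH[OF m reduced] del_block.hyps(1) del_block.prems by simp
qed

lemma bij_betw_extend_countable:
  assumes G: "countable G" "infinite G" and "finite A" "A \<subseteq> G" "B \<subseteq> G"
    and f: "bij_betw f A B"
  obtains \<sigma> where "bij_betw \<sigma> G G" "\<And>x. x \<in> A \<Longrightarrow> \<sigma> x = f x"
proof -
  have "finite B" using f \<open>finite A\<close> bij_betw_finite by blast
  have "countable (G - C) \<and> infinite (G - C)" if "finite C" for C
    using G that by (simp add: Diff_infinite_finite)
  then obtain e1 :: "'a \<Rightarrow> nat" and e2 :: "'a \<Rightarrow> nat"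
    where e1: "bij_betw e1 (G - A) UNIV" and e2: "bij_betw e2 (G - B) UNIV"
    using \<open>finite A\<close> \<open>finite B\<close> by (meson countableE_infinite)
  have rest: "bij_betw (inv_into (G - B) e2 \<circ> e1) (G - A) (G - B)"
    using bij_betw_trans[OF e1 bij_betw_inv_into[OF e2]] .
  define \<sigma> where "\<sigma> x = (if x \<in> A then f x else (inv_into (G - B) e2 \<circ> e1) x)" for x
  have "bij_betw \<sigma> A B"
    using f by (rule bij_betw_cong[THEN iffD1, rotated]) (simp add: \<sigma>_def)
  moreover have "bij_betw \<sigma> (G - A) (G - B)"
    using rest by (rule bij_betw_cong[THEN iffD1, rotated]) (simp add: \<sigma>_def)
  ultimately have "bij_betw \<sigma> (A \<union> (G - A)) (B \<union> (G - B))"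
    by (rule bij_betw_combine) blast
  moreover have "A \<union> (G - A) = G" "B \<union> (G - B) = G" using assms by auto
  ultimately show ?thesis using that \<sigma>_def by simp
qed

lemma equiv_seq_if_same_equalities:
  assumes G: "countable G" "infinite G"
    and g: "\<forall>i\<in>{1..k}. g i \<in> G" and h: "\<forall>i\<in>{1..k}. h i \<in> G"
    and same: "\<And>i j. i \<in> {1..k} \<Longrightarrow> j \<in> {1..k} \<Longrightarrow> g i = g j \<longleftrightarrow> h i = h j"
  shows "equiv_seq G k g h"
proof -
  define f where "f = h \<circ> inv_into {1..k} g"
  have fg: "f (g i) = h i" if "i \<in> {1..k}" for i
    using same[OF inv_into_into[of "g i" g] that] that by (simp add: f_def f_inv_into_f)
  have "inj_on f (g ` {1..k})"
    using fg same by (fastforce simp: inj_on_def)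
  moreover have "f ` g ` {1..k} = h ` {1..k}"
    unfolding image_image using fg by (rule image_cong[OF refl])
  ultimately have "bij_betw f (g ` {1..k}) (h ` {1..k})" by (simp add: bij_betw_def)
  then obtain \<sigma> where "bij_betw \<sigma> G G" "\<And>x. x \<in> g ` {1..k} \<Longrightarrow> \<sigma> x = f x"
    using bij_betw_extend_countable[OF G, of "g ` {1..k}" "h ` {1..k}" f] g h by blast
  then show ?thesis unfolding equiv_seq_def using fg by auto
qed

theorem mainTheorem3:
  fixes G :: "'a set" and k :: nat and \<pi> :: "nat set set"
  assumes "countable G" and "infinite G"
    and "even k" and "0 < k"
    and "\<pi> \<in> NCPP k"
  shows "(\<exists>g. (\<forall>i\<in>{1..k}. g i \<in> G) \<and> adopted k \<pi> g)
       \<and> (\<forall>g h. (\<forall>i\<in>{1..k}. g i \<in> G) \<and> (\<forall>i\<in>{1..k}. h i \<in> G)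
                 \<and> adopted k \<pi> g \<and> adopted k \<pi> h \<longrightarrow> equiv_seq G k g h)
       \<and> (\<forall>g. (\<forall>i\<in>{1..k}. g i \<in> G) \<and> adopted k \<pi> g \<longrightarrow> card (g ` {1..k}) = k div 2 + 1)"
  unfolding adopted_iff_adopted_kernel[OF assms(5,3,4)]
proof (intro conjI allI impI)
  show "\<exists>g. (\<forall>i\<in>{1..k}. g i \<in> G) \<and> adopted_kernel k \<pi> g"
    using adopted_kernel_exists[OF assms(5,3,4,2)] .
next
  fix g h :: "nat \<Rightarrow> 'a"
  assume "(\<forall>i\<in>{1..k}. g i \<in> G) \<and> (\<forall>i\<in>{1..k}. h i \<in> G)
    \<and> adopted_kernel k \<pi> g \<and> adopted_kernel k \<pi> h"
  moreover have "g i = g j \<longleftrightarrow> h i = h j" if "i \<in> {1..k}" "j \<in> {1..k}" for i j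
    using calculation that unfolding adopted_kernel_def by blast
  ultimately show "equiv_seq G k g h"
    using equiv_seq_if_same_equalities[OF assms(1,2)] by blast
next
  fix g :: "nat \<Rightarrow> 'a"
  assume "(\<forall>i\<in>{1..k}. g i \<in> G) \<and> adopted_kernel k \<pi> g"
  then show "card (g ` {1..k}) = k div 2 + 1"
    using card_adopted_kernel[OF assms(5,3,4)] by blast
qed

end
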